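(* For integers $n,m,N,M$ with $n\ge N$ and $m\ge M$, \[ \sum_{r=N}^n\sum_{s=M}^m q^{n+m-r-s}\,\Phi_{n-r,m-s}\big(zq^{2r-s},wq^{2s-r};q\big)\,\Phi_{r-N,s-M}\big(zq^{2r-s},wq^{2s-r};q^{-1}\big)=\delta_{n,N}\delta_{m,M}. \]
   Context: For $n\in\mathbb{Z}$, $(a;q)_n=(a;q)_\infty/(aq^n;q)_\infty$ (finite product for $n\ge0$; $1/(q;q)_n=0$ for $n<0$), $(a_1,\dots,a_k;q)_n=\prod_i(a_i;q)_n$. For integers $n,m$, \[\Phi_{n,m}(z,w;q):=\frac{(zwq;q)_{n+m}}{(q,zq,zwq;q)_n\,(q,wq,zwq;q)_m},\] a rational function of $z,w,q$; $\Phi_{n,m}(z,w;q^{-1})$ denotes the same expression with $q$ replaced by $q^{-1}$. $\delta$ is the Kronecker delta. *)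

theory Defs
  imports Complex_Main
begin

text \<open>Finite q-Pochhammer symbol (a;q)_n for integer n:
  (a;q)_n = prod_{k=0}^{n-1} (1 - a q^k) for n >= 0, and
  (a;q)_{-k} = 1 / prod_{i=1}^{k} (1 - a q^{-i}) for k > 0
  (this is (a;q)_inf / (a q^n;q)_inf).\<close>
definition qpoch :: "complex \<Rightarrow> complex \<Rightarrow> int \<Rightarrow> complex" where
  "qpoch a q n =
     (if 0 \<le> n then (\<Prod>k<nat n. 1 - a * q ^ k)
      else 1 / (\<Prod>i\<in>{1..nat (- n)}. 1 - a * q powi (- int i)))"

definition Phi :: "int \<Rightarrow> int \<Rightarrow> complex \<Rightarrow> complex \<Rightarrow> complex \<Rightarrow> complex" where
  "Phi n m z w q =
     qpoch (z * w * q) q (n + m) /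
     (qpoch q q n * qpoch (z * q) q n * qpoch (z * w * q) q n *
      qpoch q q m * qpoch (w * q) q m * qpoch (z * w * q) q m)"

end

(*
  The double sum is the ((n, m), (N, M)) entry of the product of two kernels on int x int,
  ordered componentwise: Phi_kernel and Phi_dual_kernel. Both are unitriangular, and for
  unitriangular kernels with finite intervals a left inverse is also a right inverse, so it
  suffices to show that the reversed product is the identity.

  After the shifts of z and w are absorbed into Z and W, an entry of the reversed product is a
  double sum over i <= a, j <= b whose summand factors as K (1 - Z W q^(i+j)) P_i Q_j. Splitting
  the linear factor suitably reduces it to sums sum_i c_i q^i p(q^i) with deg p < a, where c_i
  are the coefficients of the a-th q-difference operator. By the finite q-binomial theorem,
  sum_i c_i x^i vanishes at x = q, ..., q^a, so these sums vanish, and with them every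
  off-diagonal entry.
*)

theory Submission
  imports Defs "HOL-Computational_Algebra.Polynomial" "HOL-Library.Product_Order"
begin

section \<open>Finite q-Pochhammer products\<close>

definition qprod :: "complex \<Rightarrow> complex \<Rightarrow> int \<Rightarrow> nat \<Rightarrow> complex" where
  "qprod q X e k = (\<Prod>t<k. 1 - X * q powi (e + int t))"

lemma qprod_0 [simp]: "qprod q X e 0 = 1"
  by (simp add: qprod_def)

lemma qprod_Suc: "qprod q X e (Suc k) = qprod q X e k * (1 - X * q powi (e + int k))"
  by (simp add: qprod_def)

lemma qprod_add: "qprod q X e (k + l) = qprod q X e k * qprod q X (e + int k) l"
  by (induction l) (simp_all add: qprod_Suc algebra_simps)

lemma qprod_Suc_left: "qprod q X e (Suc k) = (1 - X * q powi e) * qprod q X (e + 1) k"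
  using qprod_add[of q X e 1 k] by (simp add: qprod_def)

lemma qprod_nonzero:
  assumes "\<And>t. t < k \<Longrightarrow> X * q powi (e + int t) \<noteq> 1"
  shows "qprod q X e k \<noteq> 0"
  using assms by (auto simp: qprod_def)

lemma qprod_nonzero_avoiding:
  assumes "\<And>u. X * q powi u \<noteq> 1"
  shows "qprod q X e k \<noteq> 0"
  using assms by (intro qprod_nonzero)

lemma qprod_concat:
  assumes "e = int i + 1 + int g"
  shows "qprod q X 1 i * qprod q X (int i + 1) g * qprod q X e k = qprod q X 1 (i + g + k)"
  using assms qprod_add[of q X 1 i g] qprod_add[of q X 1 "i + g" k] by (simp add: add_ac)

lemma qprod_overlap:
  assumes "s \<le> k" "1 \<le> k"
  shows "qprod q X 1 s * qprod q X (int s) (k - s) =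
    (1 - X * q powi (int s)) * qprod q X 1 (k - 1)"
proof (cases "s < k")
  case True
  then have "qprod q X (int s) (k - s) =
      (1 - X * q powi (int s)) * qprod q X (int s + 1) (k - 1 - s)"
    using qprod_Suc_left[of q X "int s" "k - 1 - s"] by (simp add: Suc_diff_Suc)
  moreover have "qprod q X 1 s * qprod q X (int s + 1) (k - 1 - s) = qprod q X 1 (k - 1)"
    using qprod_add[of q X 1 s "k - 1 - s"] True by (simp add: add.commute)
  ultimately show ?thesis
    by (simp add: ac_simps)
next
  case False
  with assms have "s = Suc (k - 1)"
    by simp
  then show ?thesis
    using qprod_Suc[of q X 1 "k - 1"] by (simp add: algebra_simps)
qed

locale non_root_of_unity =
  fixes q :: complex
  assumes nonzero: "q \<noteq> 0"
    and power_ne_1: "\<And>k::nat. k \<ge> 1 \<Longrightarrow> q ^ k \<noteq> 1"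
begin

lemma powi_add: "q powi (m + n) = q powi m * q powi n"
  by (simp add: power_int_add nonzero)

lemma powi_add_eq: "m + n = k \<Longrightarrow> q powi k = q powi m * q powi n"
  using powi_add by blast

lemma powi_ne_1:
  assumes "u \<noteq> 0"
  shows "q powi u \<noteq> 1"
proof (cases "u > 0")
  case True
  then show ?thesis
    using power_ne_1[of "nat u"] by (simp add: power_int_def)
next
  case False
  with assms have "q ^ nat (- u) \<noteq> 1"
    using power_ne_1[of "nat (- u)"] by simp
  then show ?thesis
    using False assms by (simp add: power_int_def field_simps)
qed

lemma qprod_1_nonzero:
  assumes "\<And>t. t < k \<Longrightarrow> e + int t \<noteq> 0"
  shows "qprod q 1 e k \<noteq> 0"
  using assms powi_ne_1 by (intro qprod_nonzero) auto

end

section \<open>The q-difference operator\<close>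

text \<open>Up to normalisation, the coefficients of the \<open>a\<close>-th q-difference operator.\<close>

definition qdiff_coeff :: "complex \<Rightarrow> nat \<Rightarrow> nat \<Rightarrow> complex" where
  "qdiff_coeff q a i =
     (if i \<le> a then 1 / (qprod q 1 1 i * qprod q 1 (int i - int a) (a - i)) else 0)"

context non_root_of_unity
begin

lemma qdiff_coeff_Suc_0:
  "qdiff_coeff q (Suc a) 0 * (1 - q powi (- 1 - int a)) = qdiff_coeff q a 0"
proof -
  have "qprod q 1 (- 1 - int a) (Suc a) = (1 - q powi (- 1 - int a)) * qprod q 1 (- int a) a"
    using qprod_Suc_left[of q 1 "- 1 - int a" a] by simp
  moreover have "qprod q 1 (- int a) a \<noteq> 0"
    by (rule qprod_1_nonzero) auto
  moreover have "1 - q powi (- 1 - int a) \<noteq> 0"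
    using powi_ne_1[of "- 1 - int a"] by simp
  ultimately show ?thesis
    by (simp add: qdiff_coeff_def)
qed

lemma qdiff_coeff_Suc_middle:
  assumes "1 \<le> i" "i \<le> a"
  shows "qdiff_coeff q (Suc a) i * (1 - q powi (- 1 - int a)) =
    qdiff_coeff q a i - q powi (- 1 - int a) * qdiff_coeff q a (i - 1)"
proof -
  define e where "e = int i - int (Suc a)"
  define A where "A = qprod q 1 1 (i - 1)"
  define B where "B = qprod q 1 (e + 1) (a - i)"
  define x where "x = q powi int i"
  define y where "y = q powi (- 1 - int a)"
  have xy: "x * y = q powi e"
    unfolding x_def y_def e_def by (rule powi_add_eq[symmetric]) simp
  have "A \<noteq> 0" "B \<noteq> 0"
    unfolding A_def B_def e_def using assms by (auto intro!: qprod_1_nonzero)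
  moreover have "1 - x \<noteq> 0" "1 - x * y \<noteq> 0"
    unfolding xy e_def using assms powi_ne_1[of "int i"] powi_ne_1[of "int i - int (Suc a)"]
    by (auto simp: x_def)
  ultimately have factors_nonzero: "A \<noteq> 0" "B \<noteq> 0" "1 - x \<noteq> 0" "1 - x * y \<noteq> 0"
    by blast+
  have "qprod q 1 1 i = A * (1 - x)"
    using qprod_Suc[of q 1 1 "i - 1"] assms by (simp add: A_def x_def of_nat_diff)
  moreover have "qprod q 1 e (Suc (a - i)) = (1 - x * y) * B"
    using qprod_Suc_left[of q 1 e "a - i"] by (simp add: B_def xy)
  moreover have "int i - int a = e + 1" "int (i - 1) - int a = e"
    "Suc a - i = Suc (a - i)" "a - (i - 1) = Suc (a - i)"
    using assms by (auto simp: e_def)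
  ultimately have coeffs: "qdiff_coeff q (Suc a) i = 1 / (A * (1 - x) * ((1 - x * y) * B))"
    "qdiff_coeff q a i = 1 / (A * (1 - x) * B)"
    "qdiff_coeff q a (i - 1) = 1 / (A * ((1 - x * y) * B))"
    using assms unfolding qdiff_coeff_def e_def[symmetric] by (simp_all only: A_def B_def) simp_all
  show ?thesis
    unfolding coeffs y_def[symmetric] using factors_nonzero
    by (simp add: divide_simps) (simp add: algebra_simps)
qed

lemma qdiff_coeff_Suc_top:
  "qdiff_coeff q (Suc a) (Suc a) * (1 - q powi (- 1 - int a)) =
    - (q powi (- 1 - int a)) * qdiff_coeff q a a"
proof -
  define x where "x = q powi (1 + int a)"
  define y where "y = q powi (- 1 - int a)"
  have xy: "x * y = 1"
    unfolding x_def y_def using powi_add_eq[of "1 + int a" "- 1 - int a" 0] by simp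
  have factors_nonzero: "qprod q 1 1 a \<noteq> 0" "1 - x \<noteq> 0"
    using powi_ne_1[of "1 + int a"] by (auto simp: x_def intro!: qprod_1_nonzero)
  have "qprod q 1 1 (Suc a) = qprod q 1 1 a * (1 - x)"
    by (simp add: qprod_Suc x_def)
  then have coeffs: "qdiff_coeff q (Suc a) (Suc a) = 1 / (qprod q 1 1 a * (1 - x))"
    "qdiff_coeff q a a = 1 / qprod q 1 1 a"
    by (simp_all add: qdiff_coeff_def)
  show ?thesis
    unfolding coeffs y_def[symmetric] using xy factors_nonzero
    by (simp add: divide_simps) (simp add: algebra_simps)
qed

lemma qdiff_coeff_Suc:
  "qdiff_coeff q (Suc a) i * (1 - q powi (- 1 - int a)) =
     qdiff_coeff q a i - q powi (- 1 - int a) * (if i = 0 then 0 else qdiff_coeff q a (i - 1))"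
proof -
  consider "i = 0" | "1 \<le> i" "i \<le> a" | "i = Suc a" | "i > Suc a"
    by linarith
  then show ?thesis
  proof cases
    case 1
    then show ?thesis
      using qdiff_coeff_Suc_0 by simp
  next
    case 2
    then show ?thesis
      using qdiff_coeff_Suc_middle by simp
  next
    case 3
    then show ?thesis
      using qdiff_coeff_Suc_top by (simp add: qdiff_coeff_def)
  next
    case 4
    then show ?thesis
      by (simp add: qdiff_coeff_def)
  qed
qed

lemma qdiff_sum_Suc:
  "(\<Sum>i\<le>Suc a. qdiff_coeff q (Suc a) i * x ^ i) * (1 - q powi (- 1 - int a)) =
     (1 - x * q powi (- 1 - int a)) * (\<Sum>i\<le>a. qdiff_coeff q a i * x ^ i)"
proof -
  define y where "y = q powi (- 1 - int a)"
  have vanish: "qdiff_coeff q a (Suc a) = 0"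
    by (simp add: qdiff_coeff_def)
  have "(\<Sum>i\<le>Suc a. qdiff_coeff q (Suc a) i * x ^ i) * (1 - y) =
      (\<Sum>i\<le>Suc a. qdiff_coeff q (Suc a) i * (1 - y) * x ^ i)"
    unfolding sum_distrib_right by (intro sum.cong refl) (simp add: ac_simps)
  also have "\<dots> = (\<Sum>i\<le>Suc a. qdiff_coeff q a i * x ^ i
      - y * ((if i = 0 then 0 else qdiff_coeff q a (i - 1)) * x ^ i))"
    by (intro sum.cong refl, simp only: qdiff_coeff_Suc[of a, folded y_def]) (simp add: algebra_simps)
  also have "\<dots> = (\<Sum>i\<le>Suc a. qdiff_coeff q a i * x ^ i)
      - y * (\<Sum>i\<le>Suc a. (if i = 0 then 0 else qdiff_coeff q a (i - 1)) * x ^ i)"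
    by (simp only: sum_subtractf sum_distrib_left)
  also have "(\<Sum>i\<le>Suc a. (if i = 0 then 0 else qdiff_coeff q a (i - 1)) * x ^ i) =
      x * (\<Sum>i\<le>a. qdiff_coeff q a i * x ^ i)"
    unfolding sum.atMost_Suc_shift by (simp add: sum_distrib_left algebra_simps)
  finally show ?thesis
    using vanish by (simp add: y_def algebra_simps)
qed

text \<open>The finite q-binomial theorem.\<close>

lemma qdiff_sum_closed_form:
  "(\<Sum>i\<le>a. qdiff_coeff q a i * x ^ i) * qprod q 1 (- int a) a = qprod q x (- int a) a"
proof (induction a)
  case 0
  then show ?case
    by (simp add: qdiff_coeff_def)
next
  case (Suc a)
  have split:
    "qprod q X (- int (Suc a)) (Suc a) = (1 - X * q powi (- 1 - int a)) * qprod q X (- int a) a"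
    for X
    using qprod_Suc_left[of q X "- 1 - int a" a] by simp
  show ?case
    unfolding split[of 1] split[of x] mult_1 mult.assoc[symmetric] qdiff_sum_Suc
    by (simp add: Suc.IH mult.assoc)
qed

lemma qdiff_sum_qpower_eq_0:
  assumes "1 \<le> k" "k \<le> a"
  shows "(\<Sum>i\<le>a. qdiff_coeff q a i * (q ^ k) ^ i) = 0"
proof -
  have "q ^ k * q powi (- int a + int (a - k)) = 1"
    using assms nonzero by (simp add: power_int_minus field_simps flip: power_int_add)
  then have "qprod q (q ^ k) (- int a) a = 0"
    using assms unfolding qprod_def by (intro prod_zero) (auto intro!: bexI[of _ "a - k"])
  moreover have "qprod q 1 (- int a) a \<noteq> 0"
    by (rule qprod_1_nonzero) auto
  ultimately show ?thesis
    using qdiff_sum_closed_form[of a "q ^ k"] by simp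
qed

lemma qdiff_sum_poly_eq_0:
  assumes "degree p < a"
  shows "(\<Sum>i\<le>a. qdiff_coeff q a i * q ^ i * poly p (q ^ i)) = 0"
proof -
  have "(\<Sum>i\<le>a. qdiff_coeff q a i * q ^ i * poly p (q ^ i))
      = (\<Sum>i\<le>a. \<Sum>k\<le>degree p. coeff p k * (qdiff_coeff q a i * (q ^ Suc k) ^ i))"
    unfolding poly_altdef sum_distrib_left
    by (intro sum.cong refl) (simp add: algebra_simps flip: power_mult power_add)
  also have "\<dots> = (\<Sum>k\<le>degree p. coeff p k * (\<Sum>i\<le>a. qdiff_coeff q a i * (q ^ Suc k) ^ i))"
    unfolding sum_distrib_left by (rule sum.swap)
  also have "\<dots> = 0"
  proof (intro sum.neutral ballI)
    fix k
    assume "k \<in> {..degree p}"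
    then have "(\<Sum>i\<le>a. qdiff_coeff q a i * (q ^ Suc k) ^ i) = 0"
      using assms by (intro qdiff_sum_qpower_eq_0) auto
    then show "coeff p k * (\<Sum>i\<le>a. qdiff_coeff q a i * (q ^ Suc k) ^ i) = 0"
      by simp
  qed
  finally show ?thesis .
qed

end

section \<open>Weighted sums annihilated by the q-difference operator\<close>

definition qprod_poly :: "complex \<Rightarrow> complex \<Rightarrow> nat \<Rightarrow> complex poly" where
  "qprod_poly q X g = (\<Prod>t<g. [:1, - X * q ^ Suc t:])"

lemma degree_qprod_poly: "degree (qprod_poly q X g) \<le> g"
proof -
  have "degree (qprod_poly q X g) \<le> (\<Sum>t<g. degree [:1, - X * q ^ Suc t:])"
    using degree_prod_sum_le[of "{..<g}" "\<lambda>t. [:1, - X * q ^ Suc t:]"]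
    by (simp add: qprod_poly_def o_def)
  also have "\<dots> \<le> g"
    using sum_mono[of "{..<g}" "\<lambda>t. degree [:1, - X * q ^ Suc t:]" "\<lambda>_. 1"] by simp
  finally show ?thesis .
qed

lemma poly_qprod_poly: "poly (qprod_poly q X g) (q ^ i) = qprod q X (int i + 1) g"
proof -
  have "q powi (int i + 1 + int t) = q ^ Suc t * q ^ i" for t
    using power_int_of_nat[of q "Suc t + i"] by (simp add: power_add add_ac)
  then show ?thesis
    unfolding qprod_poly_def qprod_def poly_prod by (intro prod.cong refl) (simp add: algebra_simps)
qed

text \<open>Completes the \<open>i\<close>-dependent products in the denominator of a weight to a product
  independent of \<open>i\<close>.\<close>

lemma qprod_poly_complement:
  assumes "i \<le> a"
  shows "qprod q X 1 (a + g) =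
    qprod q X 1 i * qprod q X (int g + 1 + int i) (a - i) * poly (qprod_poly q X g) (q ^ i)"
proof -
  have "qprod q X 1 i * qprod q X (int i + 1) g * qprod q X (int g + 1 + int i) (a - i)
      = qprod q X 1 (i + g + (a - i))"
    by (rule qprod_concat) simp
  also have "i + g + (a - i) = a + g"
    using assms by simp
  finally show ?thesis
    by (simp only: poly_qprod_poly ac_simps)
qed

text \<open>The dual summand factors into two such weights (\<open>Phi_dual_summand_factor\<close>).\<close>

definition qweight :: "complex \<Rightarrow> nat \<Rightarrow> complex \<Rightarrow> int \<Rightarrow> complex \<Rightarrow> int \<Rightarrow> nat \<Rightarrow> complex" where
  "qweight q a X d Y e i = qdiff_coeff q a i * q ^ i /
     (qprod q X 1 i * qprod q X (d + int i) (a - i) *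
      (qprod q Y 1 i * qprod q Y (e + int i) (a - i)))"

lemma qweight_eq:
  assumes "i \<le> a"
  shows "qweight q a X d Y e i = q ^ i / (qprod q 1 1 i * qprod q 1 (int i - int a) (a - i) *
    qprod q X 1 i * qprod q X (d + int i) (a - i) * qprod q Y 1 i * qprod q Y (e + int i) (a - i))"
  using assms by (simp add: qweight_def qdiff_coeff_def divide_inverse ac_simps)

lemma qweight_swap: "qweight q a X d Y e i = qweight q a Y e X d i"
  by (simp add: qweight_def ac_simps)

context non_root_of_unity
begin

lemma qweight_sum_poly_eq_0:
  assumes X: "\<And>u. X * q powi u \<noteq> 1" and Y: "\<And>u. Y * q powi u \<noteq> 1"
    and "degree r + g + h < a"
  shows "(\<Sum>i\<le>a. qweight q a X (int g + 1) Y (int h + 1) i * poly r (q ^ i)) = 0"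
proof -
  define p where "p = qprod_poly q X g * qprod_poly q Y h * r"
  define K where "K = qprod q X 1 (a + g) * qprod q Y 1 (a + h)"
  have "qweight q a X (int g + 1) Y (int h + 1) i * poly r (q ^ i) =
      qdiff_coeff q a i * q ^ i * poly p (q ^ i) / K"
    if "i \<le> a" for i
    unfolding qweight_def p_def K_def poly_mult poly_qprod_poly
      qprod_poly_complement[OF that, of q X g] qprod_poly_complement[OF that, of q Y h]
    using nonzero qprod_nonzero_avoiding[OF X] qprod_nonzero_avoiding[OF Y]
    by (simp add: field_simps)
  then have "(\<Sum>i\<le>a. qweight q a X (int g + 1) Y (int h + 1) i * poly r (q ^ i)) =
      (\<Sum>i\<le>a. qdiff_coeff q a i * q ^ i * poly p (q ^ i)) / K"
    unfolding sum_divide_distrib by (intro sum.cong) simp_all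
  also have "(\<Sum>i\<le>a. qdiff_coeff q a i * q ^ i * poly p (q ^ i)) = 0"
  proof (rule qdiff_sum_poly_eq_0)
    have "degree p \<le> degree (qprod_poly q X g) + degree (qprod_poly q Y h) + degree r"
      unfolding p_def by (meson add_le_mono degree_mult_le order_trans order_refl)
    then show "degree p < a"
      using degree_qprod_poly[of q X g] degree_qprod_poly[of q Y h] assms by linarith
  qed
  finally show ?thesis
    by simp
qed

lemma qweight_sum_overlap_eq_0:
  assumes X: "\<And>u. X * q powi u \<noteq> 1" and Y: "\<And>u. Y * q powi u \<noteq> 1"
    and "g < a"
  shows "(\<Sum>i\<le>a. qweight q a X (int g + 1) Y 0 i * (1 - Y * q ^ i)) = 0"
proof -
  define p where "p = qprod_poly q X g"
  define K where "K = qprod q X 1 (a + g) * qprod q Y 1 (a - 1)"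
  have "qweight q a X (int g + 1) Y 0 i * (1 - Y * q ^ i) =
      qdiff_coeff q a i * q ^ i * poly p (q ^ i) / K"
    if "i \<le> a" for i
  proof -
    have overlap:
      "qprod q Y 1 i * qprod q Y (int i) (a - i) = (1 - Y * q ^ i) * qprod q Y 1 (a - 1)"
      using qprod_overlap[OF that, of q Y] assms by simp
    have "1 - Y * q ^ i \<noteq> 0"
      using Y[of "int i"] by simp
    then show ?thesis
      unfolding qweight_def p_def K_def poly_qprod_poly add_0_left overlap
        qprod_poly_complement[OF that, of q X g]
      using nonzero qprod_nonzero_avoiding[OF X] qprod_nonzero_avoiding[OF Y]
      by (simp add: field_simps)
  qed
  then have "(\<Sum>i\<le>a. qweight q a X (int g + 1) Y 0 i * (1 - Y * q ^ i)) =
      (\<Sum>i\<le>a. qdiff_coeff q a i * q ^ i * poly p (q ^ i)) / K"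
    unfolding sum_divide_distrib by (intro sum.cong) simp_all
  also have "(\<Sum>i\<le>a. qdiff_coeff q a i * q ^ i * poly p (q ^ i)) = 0"
    using assms degree_qprod_poly[of q X g] unfolding p_def
    by (intro qdiff_sum_poly_eq_0) linarith
  finally show ?thesis
    by simp
qed

lemma qweight_dual_sum_eq_0_of_less:
  assumes X: "\<And>u. X * q powi u \<noteq> 1" and c: "\<And>u. c * q powi u \<noteq> 1" and "b < a"
  shows "(\<Sum>i\<le>a. \<Sum>j\<le>b.
    qweight q a X (int a - int b) c (int b) i * Q j * (1 - c * q ^ (i + j))) = 0"
proof -
  have inner:
    "(\<Sum>i\<le>a. qweight q a X (int a - int b) c (int b) i * poly [:1, - c * q ^ j:] (q ^ i)) = 0"
    if "j \<le> b" for j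
  proof (cases "b = 0")
    case True
    then show ?thesis
      using qweight_sum_overlap_eq_0[OF X c, of "a - 1" a] that \<open>b < a\<close>
      by (simp add: of_nat_diff ac_simps)
  next
    case False
    have gap: "int a - int b = int (a - b - 1) + 1" and offset: "int b = int (b - 1) + 1"
      using False \<open>b < a\<close> by auto
    show ?thesis
      unfolding gap unfolding offset
      by (rule qweight_sum_poly_eq_0[OF X c]) (use False \<open>b < a\<close> in simp)
  qed
  have "(\<Sum>i\<le>a. \<Sum>j\<le>b. qweight q a X (int a - int b) c (int b) i * Q j * (1 - c * q ^ (i + j))) =
      (\<Sum>j\<le>b. Q j *
        (\<Sum>i\<le>a. qweight q a X (int a - int b) c (int b) i * poly [:1, - c * q ^ j:] (q ^ i)))"
    by (subst sum.swap) (simp add: sum_distrib_left ac_simps power_add)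
  also have "\<dots> = 0"
    by (intro sum.neutral ballI) (simp only: atMost_iff inner mult_zero_right)
  finally show ?thesis .
qed

lemma qweight_dual_sum_eq_0_of_eq:
  assumes X: "\<And>u. X * q powi u \<noteq> 1" and Y: "\<And>u. Y * q powi u \<noteq> 1"
    and XY: "\<And>u. X * Y * q powi u \<noteq> 1" and "1 \<le> a"
  shows "(\<Sum>i\<le>a. \<Sum>j\<le>a. qweight q a X 0 (X * Y) (int a) i * qweight q a Y 0 (X * Y) (int a) j *
      (1 - X * Y * q ^ (i + j))) = 0"
proof -
  define P where "P i = qweight q a X 0 (X * Y) (int a) i" for i
  define Q where "Q j = qweight q a Y 0 (X * Y) (int a) j" for j
  have "(\<Sum>i\<le>a. P i * (1 - X * q ^ i)) = 0"
    using qweight_sum_overlap_eq_0[OF XY X, of "a - 1" a] \<open>1 \<le> a\<close>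
    by (simp add: P_def qweight_swap[of q a X] of_nat_diff)
  moreover have "(\<Sum>j\<le>a. Q j * (1 - Y * q ^ j)) = 0"
    using qweight_sum_overlap_eq_0[OF XY Y, of "a - 1" a] \<open>1 \<le> a\<close>
    by (simp add: Q_def qweight_swap[of q a Y] of_nat_diff)
  moreover have "(\<Sum>i\<le>a. \<Sum>j\<le>a. P i * Q j * (1 - X * Y * q ^ (i + j))) =
      (\<Sum>i\<le>a. P i * (1 - X * q ^ i)) * (\<Sum>j\<le>a. Q j) +
      X * (\<Sum>i\<le>a. P i * q ^ i) * (\<Sum>j\<le>a. Q j * (1 - Y * q ^ j))"
  proof -
    \<comment> \<open>1 - X Y q^(i+j) = (1 - X q^i) + X q^i (1 - Y q^j)\<close>
    have "(\<Sum>i\<le>a. \<Sum>j\<le>a. P i * Q j * (1 - X * Y * q ^ (i + j))) = (\<Sum>i\<le>a. \<Sum>j\<le>a.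
        P i * (1 - X * q ^ i) * Q j + X * (P i * q ^ i) * (Q j * (1 - Y * q ^ j)))"
      by (intro sum.cong refl) (simp add: algebra_simps power_add)
    then show ?thesis
      by (simp add: sum.distrib sum_distrib_left sum_distrib_right ac_simps) (rule sum.swap)
  qed
  ultimately have "(\<Sum>i\<le>a. \<Sum>j\<le>a. P i * Q j * (1 - X * Y * q ^ (i + j))) = 0"
    by simp
  then show ?thesis
    by (simp add: P_def Q_def)
qed

end

section \<open>The dual double sum\<close>

lemma qpoch_eq_0_of_neg:
  assumes "p \<noteq> 0" "k < 0"
  shows "qpoch p p k = 0"
proof -
  have "(\<Prod>i\<in>{1..nat (- k)}. 1 - p * p powi (- int i)) = 0"
    using assms by (intro prod_zero) (auto simp: power_int_minus intro!: bexI[of _ 1])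
  then show ?thesis
    using assms unfolding qpoch_def by simp
qed

lemma Phi_eq_0_of_neg:
  assumes "p \<noteq> 0" "k < 0 \<or> l < 0"
  shows "Phi k l X Y p = 0"
  using assms qpoch_eq_0_of_neg[of p] unfolding Phi_def by auto

lemma Phi_0_0: "Phi 0 0 X Y p = 1"
  by (simp add: Phi_def qpoch_def)

lemma Phi_swap: "Phi n m z w p = Phi m n w z p"
  by (simp add: Phi_def ac_simps)

lemma Phi_of_nat:
  "Phi (int k) (int l) X Y p =
     (\<Prod>t<k + l. 1 - X * Y * p * p ^ t) /
     ((\<Prod>t<k. 1 - p * p ^ t) * (\<Prod>t<k. 1 - X * p * p ^ t) * (\<Prod>t<k. 1 - X * Y * p * p ^ t) *
      (\<Prod>t<l. 1 - p * p ^ t) * (\<Prod>t<l. 1 - Y * p * p ^ t) * (\<Prod>t<l. 1 - X * Y * p * p ^ t))"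
  unfolding Phi_def qpoch_def of_nat_add[symmetric] nat_int by (simp only: of_nat_0_le_iff if_True)

lemma prod_qpower_eq_qprod: "(\<Prod>t<k. 1 - X * q * q ^ t) = qprod q X 1 k"
  unfolding qprod_def by (intro prod.cong refl) (simp add: power_int_add mult.assoc)

text \<open>An entry of the product of \<open>Phi_dual_kernel\<close> and \<open>Phi_kernel\<close> (in this order),
  with the shifts of \<open>z\<close> and \<open>w\<close> absorbed into \<open>Z\<close> and \<open>W\<close>.\<close>

definition Phi_dual_summand ::
    "complex \<Rightarrow> complex \<Rightarrow> complex \<Rightarrow> nat \<Rightarrow> nat \<Rightarrow> nat \<Rightarrow> nat \<Rightarrow> complex"
  where "Phi_dual_summand q Z W a b i j =
    Phi (int a - int i) (int b - int j) (Z * q powi (2 * int a - int b)) (W * q powi (2 * int b - int a))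
      (inverse q) * q ^ (i + j) * Phi (int i) (int j) Z W q"

lemma Phi_dual_summand_swap: "Phi_dual_summand q Z W a b i j = Phi_dual_summand q W Z b a j i"
  using Phi_swap[of "int a - int i" "int b - int j"] Phi_swap[of "int i" "int j"]
  by (simp add: Phi_dual_summand_def add.commute)

context non_root_of_unity
begin

lemma prod_inverse_qpower_eq_qprod:
  "(\<Prod>t<k. 1 - X * q powi e * inverse q * inverse q ^ t) = qprod q X (e - int k) k"
proof -
  have reflected:
    "1 - X * q powi (e - int k + int (k - Suc t)) = 1 - X * q powi e * inverse q * inverse q ^ t"
    if "t \<in> {..<k}" for t
  proof -
    have "e - int k + int (k - Suc t) = e + - int (Suc t)"
      using that by simp
    then show ?thesis
      by (simp only: powi_add power_int_minus power_int_of_nat power_Suc inverse_mult_distrib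
          power_inverse mult.assoc)
  qed
  have "(\<Prod>t<k. 1 - X * q powi e * inverse q * inverse q ^ t) =
      (\<Prod>t<k. 1 - X * q powi (e - int k + int (k - Suc t)))"
    by (rule prod.cong[OF refl reflected[symmetric]])
  also have "\<dots> = qprod q X (e - int k) k"
    unfolding qprod_def by (rule prod.nat_diff_reindex)
  finally show ?thesis .
qed

lemma Phi_dual_summand_factor:
  assumes "i \<le> a" "j \<le> b" "1 \<le> a + b"
  shows "Phi_dual_summand q Z W a b i j = qprod q (Z * W) 1 (a + b - 1) * (1 - Z * W * q ^ (i + j))
      * qweight q a Z (int a - int b) (Z * W) (int b) i * qweight q b W (int b - int a) (Z * W) (int a) j"
proof -
  have lengths: "int a - int i = int (a - i)" "int b - int j = int (b - j)"
    using assms by auto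
  have shifted: "Z * q powi (2 * int a - int b) * (W * q powi (2 * int b - int a)) =
      Z * W * q powi (int a + int b)"
    using powi_add_eq[of "2 * int a - int b" "2 * int b - int a" "int a + int b"] by simp
  have "int a + int b - int (a - i + (b - j)) = int (i + j)" "a - i + (b - j) = a + b - (i + j)"
    using assms by auto
  then have overlap: "qprod q (Z * W) (int a + int b - int (a - i + (b - j))) (a - i + (b - j))
      * qprod q (Z * W) 1 (i + j) = (1 - Z * W * q ^ (i + j)) * qprod q (Z * W) 1 (a + b - 1)"
    using qprod_overlap[of "i + j" "a + b" q "Z * W", unfolded power_int_of_nat] assms
    by (simp add: mult.commute)
  have offsets: "- int (a - i) = int i - int a" "- int (b - j) = int j - int b"
    "2 * int a - int b - int (a - i) = int a - int b + int i"
    "2 * int b - int a - int (b - j) = int b - int a + int j"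
    "int a + int b - int (a - i) = int b + int i" "int a + int b - int (b - j) = int a + int j"
    using assms by auto
  have ones: "(\<Prod>t<k. 1 - q * q ^ t) = qprod q 1 1 k"
    "(\<Prod>t<k. 1 - inverse q * inverse q ^ t) = qprod q 1 (- int k) k" for k
    using prod_qpower_eq_qprod[where X = 1] prod_inverse_qpower_eq_qprod[where X = 1 and e = 0]
    by simp_all
  have regroup: "x / y * z * (u / v) = (x * u) * z / (y * v)" for x y z u v :: complex
    by (simp add: divide_inverse ac_simps)
  show ?thesis
    unfolding Phi_dual_summand_def lengths Phi_of_nat shifted prod_inverse_qpower_eq_qprod
      prod_qpower_eq_qprod[where q = q] ones offsets regroup overlap
      qweight_eq[OF \<open>i \<le> a\<close>] qweight_eq[OF \<open>j \<le> b\<close>]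
    by (simp only: divide_inverse inverse_mult_distrib power_add mult_ac)
qed

lemma Phi_dual_sum_factor:
  assumes "1 \<le> a + b"
  shows "(\<Sum>i\<le>a. \<Sum>j\<le>b. Phi_dual_summand q Z W a b i j) = qprod q (Z * W) 1 (a + b - 1) *
    (\<Sum>i\<le>a. \<Sum>j\<le>b. qweight q a Z (int a - int b) (Z * W) (int b) i *
      qweight q b W (int b - int a) (Z * W) (int a) j * (1 - Z * W * q ^ (i + j)))"
  unfolding sum_distrib_left using assms
  by (intro sum.cong refl, subst Phi_dual_summand_factor) (auto simp: ac_simps)

lemma Phi_dual_sum_of_less:
  assumes Z: "\<And>u. Z * q powi u \<noteq> 1" and ZW: "\<And>u. Z * W * q powi u \<noteq> 1" and "b < a"
  shows "(\<Sum>i\<le>a. \<Sum>j\<le>b. Phi_dual_summand q Z W a b i j) = 0"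
proof -
  have "1 \<le> a + b"
    using \<open>b < a\<close> by simp
  then show ?thesis
    unfolding Phi_dual_sum_factor[OF \<open>1 \<le> a + b\<close>] qweight_dual_sum_eq_0_of_less[OF Z ZW \<open>b < a\<close>]
    by simp
qed

lemma Phi_dual_sum:
  assumes Z: "\<And>u. Z * q powi u \<noteq> 1" and W: "\<And>u. W * q powi u \<noteq> 1"
    and ZW: "\<And>u. Z * W * q powi u \<noteq> 1"
  shows "(\<Sum>i\<le>a. \<Sum>j\<le>b. Phi_dual_summand q Z W a b i j) = (if a = 0 \<and> b = 0 then 1 else 0)"
proof -
  consider "a = 0" "b = 0" | "b < a" | "a < b" | "a = b" "1 \<le> a"
    by linarith
  then show ?thesis
  proof cases
    case 1
    then show ?thesis
      by (simp add: Phi_dual_summand_def Phi_0_0)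
  next
    case 2
    then show ?thesis
      using Phi_dual_sum_of_less[OF Z ZW] by simp
  next
    case 3
    have "(\<Sum>i\<le>a. \<Sum>j\<le>b. Phi_dual_summand q Z W a b i j) =
        (\<Sum>j\<le>b. \<Sum>i\<le>a. Phi_dual_summand q W Z b a j i)"
      by (subst sum.swap) (intro sum.cong refl Phi_dual_summand_swap)
    moreover have "\<And>u. W * Z * q powi u \<noteq> 1"
      using ZW by (simp add: mult.commute)
    ultimately show ?thesis
      using 3 Phi_dual_sum_of_less[OF W] by simp
  next
    case 4
    then have "1 \<le> b + b" "1 \<le> b"
      by simp_all
    then have "(\<Sum>i\<le>b. \<Sum>j\<le>b. Phi_dual_summand q Z W b b i j) = 0"
      unfolding Phi_dual_sum_factor[OF \<open>1 \<le> b + b\<close>] using qweight_dual_sum_eq_0_of_eq[OF Z W ZW]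
      by simp
    then show ?thesis
      using 4 by simp
  qed
qed

end

section \<open>Unitriangular kernels\<close>

lemma unitriangular_left_inverse_imp_right_inverse:
  fixes A B :: "'a::order \<Rightarrow> 'a \<Rightarrow> 'b::ring_1"
  assumes finite_intervals: "\<And>x y :: 'a. finite {y..x}"
    and A_triangular: "\<And>x r. \<not> r \<le> x \<Longrightarrow> A x r = 0"
    and A_diag: "\<And>x. A x x = 1" and B_diag: "\<And>x. B x x = 1"
    and left_inverse:
      "\<And>x y. y \<le> x \<Longrightarrow> (\<Sum>r\<in>{y..x}. B x r * A r y) = (if x = y then 1 else 0)"
    and "y \<le> x"
  shows "(\<Sum>r\<in>{y..x}. A x r * B r y) = (if x = y then 1 else 0)"
proof -
  define C where "C x = (\<Sum>r\<in>{y..x}. A x r * B r y)" for x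
  have B_C: "(\<Sum>r\<in>{y..x}. B x r * C r) = B x y" if "y \<le> x" for x
  proof -
    have "(\<Sum>r\<in>{y..x}. B x r * C r) = (\<Sum>r\<in>{y..x}. \<Sum>s\<in>{y..x}. B x r * (A r s * B s y))"
    proof (intro sum.cong refl)
      fix r
      assume "r \<in> {y..x}"
      then have "C r = (\<Sum>s\<in>{y..x}. A r s * B s y)"
        unfolding C_def using A_triangular finite_intervals
        by (intro sum.mono_neutral_left) auto
      then show "B x r * C r = (\<Sum>s\<in>{y..x}. B x r * (A r s * B s y))"
        by (simp add: sum_distrib_left)
    qed
    also have "\<dots> = (\<Sum>s\<in>{y..x}. (\<Sum>r\<in>{y..x}. B x r * A r s) * B s y)"
      by (subst sum.swap) (simp add: sum_distrib_right mult.assoc)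
    also have "\<dots> = (\<Sum>s\<in>{y..x}. (\<Sum>r\<in>{s..x}. B x r * A r s) * B s y)"
      using A_triangular finite_intervals
      by (intro sum.cong refl arg_cong2[where f = "(*)"] sum.mono_neutral_right) auto
    also have "\<dots> = (\<Sum>s\<in>{y..x}. if s = x then B s y else 0)"
      by (intro sum.cong refl) (auto simp: left_inverse)
    also have "\<dots> = B x y"
      using that finite_intervals by (simp add: sum.delta)
    finally show ?thesis .
  qed
  show ?thesis
    using \<open>y \<le> x\<close> unfolding C_def[symmetric]
  proof (induction "card {y..x}" arbitrary: x rule: less_induct)
    case less
    show ?case
    proof (cases "x = y")
      case True
      then show ?thesis
        by (simp add: C_def A_diag B_diag)
    next
      case False
      have C_below: "C r = (if r = y then 1 else 0)" if "r \<in> {y..x} - {x}" for r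
      proof (rule less.hyps)
        have "{y..r} \<subset> {y..x}"
          using that by auto
        then show "card {y..r} < card {y..x}"
          by (rule psubset_card_mono[OF finite_intervals])
      qed (use that in simp)
      have "(\<Sum>r\<in>{y..x} - {x}. B x r * C r) = (\<Sum>r\<in>{y..x} - {x}. if r = y then B x r else 0)"
        by (intro sum.cong refl) (simp add: C_below)
      also have "\<dots> = B x y"
        using less.prems False finite_intervals by (simp add: sum.delta)
      finally have "(\<Sum>r\<in>{y..x} - {x}. B x r * C r) = B x y" .
      moreover have "(\<Sum>r\<in>{y..x}. B x r * C r) = C x + (\<Sum>r\<in>{y..x} - {x}. B x r * C r)"
        using sum.remove[OF finite_intervals, of x y x "\<lambda>r. B x r * C r"] less.prems by (simp add: B_diag)
      ultimately show ?thesis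
        using B_C[OF less.prems] False by simp
    qed
  qed
qed

lemma sum_atLeastAtMost_int_shift: "(\<Sum>r\<in>{N..N + int a}. f r) = (\<Sum>i\<le>a. f (N + int i))"
proof -
  have "{N..N + int a} = (\<lambda>i. N + int i) ` {..a}"
  proof (intro equalityI subsetI)
    fix r
    assume "r \<in> {N..N + int a}"
    then show "r \<in> (\<lambda>i. N + int i) ` {..a}"
      by (intro image_eqI[of _ _ "nat (r - N)"]) auto
  qed auto
  moreover have "inj_on (\<lambda>i. N + int i) {..a}"
    by (auto simp: inj_on_def)
  ultimately show ?thesis
    by (simp add: sum.reindex)
qed

definition Phi_kernel :: "complex \<Rightarrow> complex \<Rightarrow> complex \<Rightarrow> int \<times> int \<Rightarrow> int \<times> int \<Rightarrow> complex" where
  "Phi_kernel q z w x r = q powi (fst x + snd x - fst r - snd r) *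
     Phi (fst x - fst r) (snd x - snd r) (z * q powi (2 * fst r - snd r)) (w * q powi (2 * snd r - fst r)) q"

definition Phi_dual_kernel :: "complex \<Rightarrow> complex \<Rightarrow> complex \<Rightarrow> int \<times> int \<Rightarrow> int \<times> int \<Rightarrow> complex" where
  "Phi_dual_kernel q z w x r =
     Phi (fst x - fst r) (snd x - snd r) (z * q powi (2 * fst x - snd x)) (w * q powi (2 * snd x - fst x))
       (inverse q)"

context non_root_of_unity
begin

lemma Phi_kernel_eq_0: "\<not> r \<le> x \<Longrightarrow> Phi_kernel q z w x r = 0"
  using Phi_eq_0_of_neg[OF nonzero] by (auto simp: Phi_kernel_def less_eq_prod_def)

lemma Phi_kernel_diag: "Phi_kernel q z w x x = 1"
  by (simp add: Phi_kernel_def Phi_0_0)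

lemma Phi_dual_kernel_diag: "Phi_dual_kernel q z w x x = 1"
  by (simp add: Phi_dual_kernel_def Phi_0_0)

lemma Phi_dual_kernel_mult_Phi_kernel:
  assumes z: "\<And>k. z * q powi k \<noteq> 1" and w: "\<And>k. w * q powi k \<noteq> 1"
    and zw: "\<And>k. z * w * q powi k \<noteq> 1" and "y \<le> x"
  shows "(\<Sum>r\<in>{y..x}. Phi_dual_kernel q z w x r * Phi_kernel q z w r y) = (if x = y then 1 else 0)"
proof -
  obtain N M where y: "y = (N, M)"
    by (cases y)
  obtain a b where x: "x = (N + int a, M + int b)"
  proof -
    have "x = (N + int (nat (fst x - N)), M + int (nat (snd x - M)))"
      using \<open>y \<le> x\<close> by (auto simp: y less_eq_prod_def)
    then show ?thesis
      by (rule that)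
  qed
  define Z where "Z = z * q powi (2 * N - M)"
  define W where "W = w * q powi (2 * M - N)"
  have "Z * q powi u = z * q powi (2 * N - M + u)" "W * q powi u = w * q powi (2 * M - N + u)"
    "Z * W * q powi u = z * w * q powi (2 * N - M + (2 * M - N) + u)" for u
    by (simp_all only: Z_def W_def powi_add mult_ac)
  then have Z: "\<And>u. Z * q powi u \<noteq> 1" and W: "\<And>u. W * q powi u \<noteq> 1"
    and ZW: "\<And>u. Z * W * q powi u \<noteq> 1"
    using z w zw by simp_all
  have "(\<Sum>r\<in>{y..x}. Phi_dual_kernel q z w x r * Phi_kernel q z w r y) =
      (\<Sum>r\<in>{N..N + int a}. \<Sum>s\<in>{M..M + int b}.
        Phi_dual_kernel q z w x (r, s) * Phi_kernel q z w (r, s) y)"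
    by (simp add: x y atLeastAtMost_prod_eq sum.cartesian_product)
  also have "\<dots> = (\<Sum>i\<le>a. \<Sum>j\<le>b. Phi_dual_summand q Z W a b i j)"
    unfolding sum_atLeastAtMost_int_shift
  proof (intro sum.cong refl)
    fix i j
    have shifts: "z * q powi (2 * (N + int a) - (M + int b)) = Z * q powi (2 * int a - int b)"
      "w * q powi (2 * (M + int b) - (N + int a)) = W * q powi (2 * int b - int a)"
      using powi_add_eq[of "2 * N - M" "2 * int a - int b" "2 * (N + int a) - (M + int b)"]
        powi_add_eq[of "2 * M - N" "2 * int b - int a" "2 * (M + int b) - (N + int a)"]
      by (simp_all add: Z_def W_def mult.assoc)
    have "N + int i + (M + int j) - N - M = int (i + j)"
      by simp
    then have power: "q powi (N + int i + (M + int j) - N - M) = q ^ (i + j)"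
      by (simp only: power_int_of_nat)
    show "Phi_dual_kernel q z w x (N + int i, M + int j) *
        Phi_kernel q z w (N + int i, M + int j) y = Phi_dual_summand q Z W a b i j"
      unfolding Phi_dual_kernel_def Phi_kernel_def Phi_dual_summand_def x y fst_conv snd_conv
        shifts power Z_def[symmetric] W_def[symmetric]
      by (simp add: ac_simps)
  qed
  also have "\<dots> = (if x = y then 1 else 0)"
    unfolding Phi_dual_sum[OF Z W ZW] by (simp add: x y)
  finally show ?thesis .
qed

end

theorem proposition4p1:
  fixes z w q :: complex and n m N M :: int
  assumes "q \<noteq> 0"
    and "\<And>k::nat. k \<ge> 1 \<Longrightarrow> q ^ k \<noteq> 1"
    and "\<And>k::int. z * q powi k \<noteq> 1"
    and "\<And>k::int. w * q powi k \<noteq> 1"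
    and "\<And>k::int. z * w * q powi k \<noteq> 1"
    and "n \<ge> N" and "m \<ge> M"
  shows "(\<Sum>r\<in>{N..n}. \<Sum>s\<in>{M..m}.
            q powi (n + m - r - s)
            * Phi (n - r) (m - s) (z * q powi (2*r - s)) (w * q powi (2*s - r)) q
            * Phi (r - N) (s - M) (z * q powi (2*r - s)) (w * q powi (2*s - r)) (inverse q))
         = (if n = N \<and> m = M then 1 else 0)"
proof -
  interpret non_root_of_unity q
    using assms(1,2) by unfold_locales
  have "(\<Sum>r\<in>{N..n}. \<Sum>s\<in>{M..m}.
            q powi (n + m - r - s)
            * Phi (n - r) (m - s) (z * q powi (2*r - s)) (w * q powi (2*s - r)) q
            * Phi (r - N) (s - M) (z * q powi (2*r - s)) (w * q powi (2*s - r)) (inverse q))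
      = (\<Sum>r\<in>{(N, M)..(n, m)}. Phi_kernel q z w (n, m) r * Phi_dual_kernel q z w r (N, M))"
    by (simp add: atLeastAtMost_prod_eq sum.cartesian_product split_beta
        Phi_kernel_def Phi_dual_kernel_def)
  also have "\<dots> = (if (n, m) = (N, M) then 1 else 0)"
  proof (rule unitriangular_left_inverse_imp_right_inverse)
    show "finite {y..x}" for x y :: "int \<times> int"
      by (simp add: atLeastAtMost_prod_eq)
    show "(\<Sum>r\<in>{y..x}. Phi_dual_kernel q z w x r * Phi_kernel q z w r y) =
        (if x = y then 1 else 0)" if "y \<le> x" for x y
      using Phi_dual_kernel_mult_Phi_kernel[OF assms(3-5) that] .
  qed (use Phi_kernel_eq_0 Phi_kernel_diag Phi_dual_kernel_diag assms(6,7) in auto)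
  finally show ?thesis
    by simp
qed

end
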